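(* Let $n\ge2$ be an integer. Then there is a bijection between the sets $\Sigma_{n^2}$ and $\Pi_n$.
   Context: $\Sigma_{n^2}$ is the set of all $n^2\times n^2$ permutation matrices (binary matrices with exactly one 1 in every row and every column) which, when partitioned into an $n\times n$ array of $n\times n$ blocks, have exactly one entry equal to 1 in each block. $\Pi_n$ is the set of all $n\times n$ matrices whose entries are ordered pairs $\langle a,b\rangle$ with $a,b\in\{1,\dots,n\}$ such that in every row the first components of the entries, read in order, form a permutation of $\{1,\dots,n\}$, and in every column the second components of the entries, read in order, form a permutation of $\{1,\dots,n\}$. *)

theory Defs
  imports "HOL-Library.FuncSet"
begin

text \<open>Matrices are represented as extensional functions on index pairs,
  with rows and columns indexed from 0. An (n^2 x n^2) matrix is partitioned
  into n x n blocks of size n x n; entry (i,j) lies in block (i div n, j div n).\<close>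

definition Sigma_sq :: "nat \<Rightarrow> (nat \<times> nat \<Rightarrow> nat) set" where
  "Sigma_sq n = {M. M \<in> ({0..<n^2} \<times> {0..<n^2}) \<rightarrow>\<^sub>E {0, 1} \<and>
      (\<forall>i<n^2. \<exists>!j. j < n^2 \<and> M (i, j) = 1) \<and>
      (\<forall>j<n^2. \<exists>!i. i < n^2 \<and> M (i, j) = 1) \<and>
      (\<forall>a<n. \<forall>b<n. \<exists>!p. p \<in> {0..<n^2} \<times> {0..<n^2} \<and>
           fst p div n = a \<and> snd p div n = b \<and> M p = 1)}"

definition Pi_n :: "nat \<Rightarrow> (nat \<times> nat \<Rightarrow> nat \<times> nat) set" where
  "Pi_n n = {M. M \<in> ({0..<n} \<times> {0..<n}) \<rightarrow>\<^sub>E ({1..n} \<times> {1..n}) \<and>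
      (\<forall>i<n. bij_betw (\<lambda>j. fst (M (i, j))) {0..<n} {1..n}) \<and>
      (\<forall>j<n. bij_betw (\<lambda>i. snd (M (i, j))) {0..<n} {1..n})}"

end

theory Submission
  imports Defs
begin

text \<open>Write row and column indices of an \<open>n\<^sup>2 \<times> n\<^sup>2\<close> matrix as
  \<open>a * n + c\<close> and \<open>b * n + d\<close> with \<open>a, b, c, d < n\<close>. A matrix in \<open>\<Sigma>\<close>
  has exactly one 1 in block \<open>(a, b)\<close>, say at offset \<open>(c, d)\<close>; recording
  \<open>\<langle>c + 1, d + 1\<rangle>\<close> at position \<open>(a, b)\<close> gives an \<open>n \<times> n\<close> matrix of pairs.
  Row \<open>a * n + c\<close> of the big matrix has a unique 1 iff exactly one entry of row \<open>a\<close>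
  of the small matrix has first component \<open>c + 1\<close>, i.e. iff the first components of
  that row form a permutation; columns likewise give the condition on second components.
  Conversely every matrix of pairs arises in this way from exactly one 0/1 matrix.\<close>

lemma bij_betw_ex1_iff:
  assumes "bij_betw h A B"
  shows "(\<exists>!y. y \<in> B \<and> Q y) \<longleftrightarrow> (\<exists>!x. x \<in> A \<and> Q (h x))"
  using assms unfolding bij_betw_def inj_on_def by blast

lemma ex1_cong_bounded:
  assumes "\<And>x. x \<in> A \<Longrightarrow> P x \<longleftrightarrow> Q x"
  shows "(\<exists>!x. x \<in> A \<and> P x) \<longleftrightarrow> (\<exists>!x. x \<in> A \<and> Q x)"
  using assms by blast

lemma bij_betw_iff_ex1:
  assumes "f ` A \<subseteq> B"
  shows "bij_betw f A B \<longleftrightarrow> (\<forall>y\<in>B. \<exists>!x. x \<in> A \<and> f x = y)"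
  using assms unfolding bij_betw_def inj_on_def by blast

lemma mult_add_less_square:
  assumes "a < n" "c < (n::nat)"
  shows "a * n + c < n^2"
proof -
  have "a * n + c < (a + 1) * n" using assms(2) by simp
  also have "\<dots> \<le> n * n" using assms(1) by (intro mult_le_mono1) simp
  finally show ?thesis by (simp add: power2_eq_square)
qed

lemma less_square_div_mod:
  assumes "i < (n::nat)^2"
  shows "i div n < n" "i mod n < n"
  using assms by (cases "n = 0"; simp add: power2_eq_square less_mult_imp_div_less)+

lemma bij_betw_mult_add:
  "bij_betw (\<lambda>(a, c). a * n + c :: nat) ({0..<n} \<times> {0..<n}) {0..<n^2}"
  by (rule bij_betw_byWitness[where f' = "\<lambda>i. (i div n, i mod n)"])
    (auto simp: mult_add_less_square less_square_div_mod)

lemma ball_less_square_iff: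
  "(\<forall>i<(n::nat)^2. Q i) \<longleftrightarrow> (\<forall>a<n. \<forall>c<n. Q (a * n + c))"
proof
  assume "\<forall>a<n. \<forall>c<n. Q (a * n + c)"
  then have "Q (i div n * n + i mod n)" if "i < n^2" for i
    using that less_square_div_mod by blast
  then show "\<forall>i<n^2. Q i" by simp
qed (simp add: mult_add_less_square)

lemma ex1_less_square_iff:
  "(\<exists>!i. i < (n::nat)^2 \<and> Q i) \<longleftrightarrow> (\<exists>!q. q \<in> {0..<n} \<times> {0..<n} \<and> Q (fst q * n + snd q))"
  using bij_betw_ex1_iff[OF bij_betw_mult_add[of n], where Q = Q] by (simp add: split_def)

lemma bij_betw_block_positions:
  assumes "a < n" "b < (n::nat)"
  shows "bij_betw (\<lambda>q. (a * n + fst q, b * n + snd q)) ({0..<n} \<times> {0..<n})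
           {p \<in> {0..<n^2} \<times> {0..<n^2}. fst p div n = a \<and> snd p div n = b}"
proof (rule bij_betw_byWitness[where f' = "\<lambda>p. (fst p mod n, snd p mod n)"])
  have "p = (a * n + fst p mod n, b * n + snd p mod n)" if "fst p div n = a" "snd p div n = b" for p
    using that by (metis div_mult_mod_eq prod.collapse)
  then show "\<forall>p\<in>{p \<in> {0..<n^2} \<times> {0..<n^2}. fst p div n = a \<and> snd p div n = b}.
      (a * n + fst (fst p mod n, snd p mod n), b * n + snd (fst p mod n, snd p mod n)) = p"
    by auto
qed (auto simp: assms mult_add_less_square less_square_div_mod)

lemma Sigma_sq_iff:
  "M \<in> Sigma_sq n \<longleftrightarrow> M \<in> ({0..<n^2} \<times> {0..<n^2}) \<rightarrow>\<^sub>E {0, 1} \<and>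
     (\<forall>a<n. \<forall>c<n. \<exists>!q. q \<in> {0..<n} \<times> {0..<n} \<and> M (a * n + c, fst q * n + snd q) = 1) \<and>
     (\<forall>b<n. \<forall>d<n. \<exists>!q. q \<in> {0..<n} \<times> {0..<n} \<and> M (fst q * n + snd q, b * n + d) = 1) \<and>
     (\<forall>a<n. \<forall>b<n. \<exists>!q. q \<in> {0..<n} \<times> {0..<n} \<and> M (a * n + fst q, b * n + snd q) = 1)"
proof -
  have "(\<exists>!p. p \<in> {0..<n^2} \<times> {0..<n^2} \<and> fst p div n = a \<and> snd p div n = b \<and> M p = 1)
      \<longleftrightarrow> (\<exists>!q. q \<in> {0..<n} \<times> {0..<n} \<and> M (a * n + fst q, b * n + snd q) = 1)"
    if "a < n" "b < n" for a b
    using bij_betw_ex1_iff[OF bij_betw_block_positions[OF that], where Q = "\<lambda>p. M p = 1"]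
    by (simp add: conj_assoc)
  then show ?thesis
    unfolding Sigma_sq_def mem_Collect_eq ball_less_square_iff ex1_less_square_iff by auto
qed

lemma ex1_offset_pair:
  assumes "x \<in> {1..n} \<times> {1..(n::nat)}"
  shows "\<exists>!q. q \<in> {0..<n} \<times> {0..<n} \<and> x = (fst q + 1, snd q + 1)"
  by (rule ex1I[of _ "(fst x - 1, snd x - 1)"]) (use assms in \<open>auto simp: prod_eq_iff\<close>)

lemma ball_atLeastAtMost_shift_iff:
  "(\<forall>y\<in>{1..n}. Q y) \<longleftrightarrow> (\<forall>c<(n::nat). Q (c + 1))"
proof
  assume "\<forall>c<n. Q (c + 1)"
  then have "Q y" if "y \<in> {1..n}" for y
    using that by (cases y) auto
  then show "\<forall>y\<in>{1..n}. Q y" ..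
qed simp

lemma ex1_fst_iff_ex1_offset:
  fixes g :: "nat \<Rightarrow> nat \<times> nat"
  assumes "\<forall>b<n. snd (g b) \<in> {1..n}"
  shows "(\<exists>!b. b \<in> {0..<n} \<and> fst (g b) = y) \<longleftrightarrow>
    (\<exists>!q. q \<in> {0..<n} \<times> {0..<n} \<and> g (fst q) = (y, snd q + 1))"
proof
  assume "\<exists>!b. b \<in> {0..<n} \<and> fst (g b) = y"
  then obtain b where b: "b \<in> {0..<n} \<and> fst (g b) = y"
    and uniq: "\<forall>b'. b' \<in> {0..<n} \<and> fst (g b') = y \<longrightarrow> b' = b"
    by (rule ex1E)
  show "\<exists>!q. q \<in> {0..<n} \<times> {0..<n} \<and> g (fst q) = (y, snd q + 1)"
  proof (rule ex1I[of _ "(b, snd (g b) - 1)"])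
    show "(b, snd (g b) - 1) \<in> {0..<n} \<times> {0..<n} \<and>
        g (fst (b, snd (g b) - 1)) = (y, snd (b, snd (g b) - 1) + 1)"
      using assms b by (auto simp: prod_eq_iff)
  next
    fix q assume q: "q \<in> {0..<n} \<times> {0..<n} \<and> g (fst q) = (y, snd q + 1)"
    then have "fst q = b" using uniq by auto
    then show "q = (b, snd (g b) - 1)" using q by (auto simp: prod_eq_iff)
  qed
next
  assume "\<exists>!q. q \<in> {0..<n} \<times> {0..<n} \<and> g (fst q) = (y, snd q + 1)"
  then obtain q where q: "q \<in> {0..<n} \<times> {0..<n} \<and> g (fst q) = (y, snd q + 1)"
    and uniq: "\<forall>q'. q' \<in> {0..<n} \<times> {0..<n} \<and> g (fst q') = (y, snd q' + 1) \<longrightarrow> q' = q"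
    by (rule ex1E)
  show "\<exists>!b. b \<in> {0..<n} \<and> fst (g b) = y"
  proof (rule ex1I[of _ "fst q"])
    fix b assume b: "b \<in> {0..<n} \<and> fst (g b) = y"
    then have "(b, snd (g b) - 1) = q"
      using uniq[rule_format, of "(b, snd (g b) - 1)"] assms by (auto simp: prod_eq_iff)
    then show "b = fst q" by auto
  qed (use q in auto)
qed

lemma bij_betw_fst_iff_ex1:
  fixes g :: "nat \<Rightarrow> nat \<times> nat"
  assumes "\<forall>b<n. g b \<in> {1..n} \<times> {1..n}"
  shows "bij_betw (\<lambda>b. fst (g b)) {0..<n} {1..n} \<longleftrightarrow>
    (\<forall>c<n. \<exists>!q. q \<in> {0..<n} \<times> {0..<n} \<and> g (fst q) = (c + 1, snd q + 1))"
proof -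
  have snd_range: "\<forall>b<n. snd (g b) \<in> {1..n}"
    using assms by auto
  have "(\<lambda>b. fst (g b)) ` {0..<n} \<subseteq> {1..n}"
    using assms by auto
  then have "bij_betw (\<lambda>b. fst (g b)) {0..<n} {1..n} \<longleftrightarrow>
      (\<forall>y\<in>{1..n}. \<exists>!b. b \<in> {0..<n} \<and> fst (g b) = y)"
    by (rule bij_betw_iff_ex1)
  also have "\<dots> \<longleftrightarrow> (\<forall>c<n. \<exists>!b. b \<in> {0..<n} \<and> fst (g b) = c + 1)"
    by (rule ball_atLeastAtMost_shift_iff)
  also have "\<dots> \<longleftrightarrow> (\<forall>c<n. \<exists>!q. q \<in> {0..<n} \<times> {0..<n} \<and> g (fst q) = (c + 1, snd q + 1))"
    by (simp only: ex1_fst_iff_ex1_offset[OF snd_range])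
  finally show ?thesis .
qed

text \<open>Matrix indices start at 0, whereas the components of the pairs range over
  \<open>{1..n}\<close>; hence the shift by 1.\<close>

definition corresponds :: "nat \<Rightarrow> (nat \<times> nat \<Rightarrow> nat) \<Rightarrow> (nat \<times> nat \<Rightarrow> nat \<times> nat) \<Rightarrow> bool" where
  "corresponds n M P \<longleftrightarrow>
     (\<forall>a<n. \<forall>b<n. \<forall>c<n. \<forall>d<n. M (a * n + c, b * n + d) = 1 \<longleftrightarrow> P (a, b) = (c + 1, d + 1))"

lemma correspondsD:
  assumes "corresponds n M P" "a < n" "b < n" "c < n" "d < n"
  shows "M (a * n + c, b * n + d) = 1 \<longleftrightarrow> P (a, b) = (c + 1, d + 1)"
  using assms unfolding corresponds_def by blast

lemma corresponds_rows_iff: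
  assumes "corresponds n M P" and P: "P \<in> ({0..<n} \<times> {0..<n}) \<rightarrow>\<^sub>E ({1..n} \<times> {1..n})"
    and "a < n"
  shows "(\<forall>c<n. \<exists>!q. q \<in> {0..<n} \<times> {0..<n} \<and> M (a * n + c, fst q * n + snd q) = 1)
    \<longleftrightarrow> bij_betw (\<lambda>b. fst (P (a, b))) {0..<n} {1..n}"
proof -
  have cong: "(\<exists>!q. q \<in> {0..<n} \<times> {0..<n} \<and> M (a * n + c, fst q * n + snd q) = 1)
     \<longleftrightarrow> (\<exists>!q. q \<in> {0..<n} \<times> {0..<n} \<and> P (a, fst q) = (c + 1, snd q + 1))" if "c < n" for c
    by (rule ex1_cong_bounded, rule correspondsD[OF assms(1)]) (use \<open>a < n\<close> that in auto)
  have "\<forall>b<n. P (a, b) \<in> {1..n} \<times> {1..n}"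
    using P \<open>a < n\<close> by (auto simp: PiE_iff)
  then have bij_iff: "bij_betw (\<lambda>b. fst (P (a, b))) {0..<n} {1..n} \<longleftrightarrow>
      (\<forall>c<n. \<exists>!q. q \<in> {0..<n} \<times> {0..<n} \<and> P (a, fst q) = (c + 1, snd q + 1))"
    by (rule bij_betw_fst_iff_ex1)
  show ?thesis
    unfolding bij_iff by (rule all_cong) (rule cong)
qed

lemma corresponds_cols_iff:
  assumes "corresponds n M P" and P: "P \<in> ({0..<n} \<times> {0..<n}) \<rightarrow>\<^sub>E ({1..n} \<times> {1..n})"
    and "b < n"
  shows "(\<forall>d<n. \<exists>!q. q \<in> {0..<n} \<times> {0..<n} \<and> M (fst q * n + snd q, b * n + d) = 1)
    \<longleftrightarrow> bij_betw (\<lambda>a. snd (P (a, b))) {0..<n} {1..n}"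
proof -
  have cong: "(\<exists>!q. q \<in> {0..<n} \<times> {0..<n} \<and> M (fst q * n + snd q, b * n + d) = 1)
     \<longleftrightarrow> (\<exists>!q. q \<in> {0..<n} \<times> {0..<n} \<and> prod.swap (P (fst q, b)) = (d + 1, snd q + 1))"
    if "d < n" for d
    by (rule ex1_cong_bounded, subst correspondsD[OF assms(1)])
      (use \<open>b < n\<close> that in \<open>auto simp: prod_eq_iff\<close>)
  have range: "\<forall>a<n. prod.swap (P (a, b)) \<in> {1..n} \<times> {1..n}"
    using P \<open>b < n\<close> by (auto simp: PiE_iff mem_Times_iff)
  note bij_iff = bij_betw_fst_iff_ex1[where g = "\<lambda>a. prod.swap (P (a, b))", OF range, unfolded fst_swap]
  show ?thesis
    unfolding bij_iff by (rule all_cong) (rule cong)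
qed

lemma corresponds_blocks_ex1:
  assumes "corresponds n M P" and P: "P \<in> ({0..<n} \<times> {0..<n}) \<rightarrow>\<^sub>E ({1..n} \<times> {1..n})"
    and "a < n" "b < n"
  shows "\<exists>!q. q \<in> {0..<n} \<times> {0..<n} \<and> M (a * n + fst q, b * n + snd q) = 1"
proof -
  have range: "P (a, b) \<in> {1..n} \<times> {1..n}"
    using P assms(3,4) by (auto simp: PiE_iff)
  have cong: "(\<exists>!q. q \<in> {0..<n} \<times> {0..<n} \<and> M (a * n + fst q, b * n + snd q) = 1)
      \<longleftrightarrow> (\<exists>!q. q \<in> {0..<n} \<times> {0..<n} \<and> P (a, b) = (fst q + 1, snd q + 1))"
    by (rule ex1_cong_bounded, rule correspondsD[OF assms(1)]) (use assms(3,4) in auto)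
  show ?thesis
    unfolding cong by (rule ex1_offset_pair[OF range])
qed

lemma Sigma_sq_iff_Pi_n:
  assumes "corresponds n M P"
    and M: "M \<in> ({0..<n^2} \<times> {0..<n^2}) \<rightarrow>\<^sub>E {0, 1}"
    and P: "P \<in> ({0..<n} \<times> {0..<n}) \<rightarrow>\<^sub>E ({1..n} \<times> {1..n})"
  shows "M \<in> Sigma_sq n \<longleftrightarrow> P \<in> Pi_n n"
proof -
  have "(\<forall>a<n. \<forall>c<n. \<exists>!q. q \<in> {0..<n} \<times> {0..<n} \<and> M (a * n + c, fst q * n + snd q) = 1)
      \<longleftrightarrow> (\<forall>a<n. bij_betw (\<lambda>b. fst (P (a, b))) {0..<n} {1..n})"
    by (rule all_cong) (rule corresponds_rows_iff[OF assms(1) P])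
  moreover have "(\<forall>b<n. \<forall>d<n. \<exists>!q. q \<in> {0..<n} \<times> {0..<n} \<and> M (fst q * n + snd q, b * n + d) = 1)
      \<longleftrightarrow> (\<forall>b<n. bij_betw (\<lambda>a. snd (P (a, b))) {0..<n} {1..n})"
    by (rule all_cong) (rule corresponds_cols_iff[OF assms(1) P])
  moreover have blocks: "\<forall>a<n. \<forall>b<n. \<exists>!q. q \<in> {0..<n} \<times> {0..<n} \<and> M (a * n + fst q, b * n + snd q) = 1"
    by (intro allI impI corresponds_blocks_ex1[OF assms(1) P])
  ultimately show ?thesis
    unfolding Sigma_sq_iff Pi_n_def mem_Collect_eq using M P by (simp only: blocks[THEN eqTrueI] simp_thms)
qed

definition block_offset :: "nat \<Rightarrow> (nat \<times> nat \<Rightarrow> nat) \<Rightarrow> nat \<Rightarrow> nat \<Rightarrow> nat \<times> nat" where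
  "block_offset n M a b = (THE q. q \<in> {0..<n} \<times> {0..<n} \<and> M (a * n + fst q, b * n + snd q) = 1)"

definition pair_matrix :: "nat \<Rightarrow> (nat \<times> nat \<Rightarrow> nat) \<Rightarrow> nat \<times> nat \<Rightarrow> nat \<times> nat" where
  "pair_matrix n M = restrict (\<lambda>(a, b). (fst (block_offset n M a b) + 1, snd (block_offset n M a b) + 1))
     ({0..<n} \<times> {0..<n})"

definition perm_matrix :: "nat \<Rightarrow> (nat \<times> nat \<Rightarrow> nat \<times> nat) \<Rightarrow> nat \<times> nat \<Rightarrow> nat" where
  "perm_matrix n P = restrict (\<lambda>(i, j). if P (i div n, j div n) = (i mod n + 1, j mod n + 1) then 1 else 0)
     ({0..<n^2} \<times> {0..<n^2})"

lemma Sigma_sq_extensional: "M \<in> Sigma_sq n \<Longrightarrow> M \<in> ({0..<n^2} \<times> {0..<n^2}) \<rightarrow>\<^sub>E {0, 1}"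
  by (simp add: Sigma_sq_def)

lemma Pi_n_extensional: "P \<in> Pi_n n \<Longrightarrow> P \<in> ({0..<n} \<times> {0..<n}) \<rightarrow>\<^sub>E ({1..n} \<times> {1..n})"
  by (simp add: Pi_n_def)

lemma block_offset_iff:
  assumes "M \<in> Sigma_sq n" "a < n" "b < n"
  shows "q \<in> {0..<n} \<times> {0..<n} \<and> M (a * n + fst q, b * n + snd q) = 1 \<longleftrightarrow> q = block_offset n M a b"
proof -
  have "\<forall>a<n. \<forall>b<n. \<exists>!q. q \<in> {0..<n} \<times> {0..<n} \<and> M (a * n + fst q, b * n + snd q) = 1"
    using assms(1) unfolding Sigma_sq_iff by (elim conjE)
  note ex1 = this[rule_format, OF assms(2,3)]
  show ?thesis
  proof
    assume "q \<in> {0..<n} \<times> {0..<n} \<and> M (a * n + fst q, b * n + snd q) = 1"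
    then show "q = block_offset n M a b"
      unfolding block_offset_def by (rule the1_equality[OF ex1, symmetric])
  qed (use theI'[OF ex1, folded block_offset_def] in simp)
qed

lemma corresponds_pair_matrix:
  assumes "M \<in> Sigma_sq n"
  shows "corresponds n M (pair_matrix n M)"
  unfolding corresponds_def
proof (intro allI impI)
  fix a b c d assume "a < n" "b < n" "c < n" "d < n"
  then show "M (a * n + c, b * n + d) = 1 \<longleftrightarrow> pair_matrix n M (a, b) = (c + 1, d + 1)"
    using block_offset_iff[OF assms \<open>a < n\<close> \<open>b < n\<close>, of "(c, d)"]
    by (auto simp: pair_matrix_def prod_eq_iff)
qed

lemma pair_matrix_extensional:
  assumes "M \<in> Sigma_sq n"
  shows "pair_matrix n M \<in> ({0..<n} \<times> {0..<n}) \<rightarrow>\<^sub>E ({1..n} \<times> {1..n})"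
proof -
  have "block_offset n M a b \<in> {0..<n} \<times> {0..<n}" if "a < n" "b < n" for a b
    using block_offset_iff[OF assms that] by blast
  then show ?thesis
    unfolding pair_matrix_def by (auto simp: mem_Times_iff Suc_le_eq)
qed

lemma corresponds_perm_matrix: "corresponds n (perm_matrix n P) P"
  unfolding corresponds_def
proof (intro allI impI)
  fix a b c d assume "a < n" "b < n" "c < n" "d < n"
  then have "(a * n + c) div n = a" "(a * n + c) mod n = c" "(b * n + d) div n = b" "(b * n + d) mod n = d"
    by simp_all
  with \<open>a < n\<close> \<open>b < n\<close> \<open>c < n\<close> \<open>d < n\<close>
  show "perm_matrix n P (a * n + c, b * n + d) = 1 \<longleftrightarrow> P (a, b) = (c + 1, d + 1)"
    by (simp add: perm_matrix_def mult_add_less_square)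
qed

lemma perm_matrix_extensional: "perm_matrix n P \<in> ({0..<n^2} \<times> {0..<n^2}) \<rightarrow>\<^sub>E {0, 1}"
  unfolding perm_matrix_def restrict_PiE_iff by simp

lemma pair_matrix_in_Pi_n: "M \<in> Sigma_sq n \<Longrightarrow> pair_matrix n M \<in> Pi_n n"
  using Sigma_sq_iff_Pi_n[OF corresponds_pair_matrix Sigma_sq_extensional pair_matrix_extensional]
  by blast

lemma perm_matrix_in_Sigma_sq: "P \<in> Pi_n n \<Longrightarrow> perm_matrix n P \<in> Sigma_sq n"
  using Sigma_sq_iff_Pi_n[OF corresponds_perm_matrix perm_matrix_extensional Pi_n_extensional]
  by blast

lemma corresponds_unique_left:
  assumes "corresponds n M P" "corresponds n M' P"
    and M: "M \<in> ({0..<n^2} \<times> {0..<n^2}) \<rightarrow>\<^sub>E {0, 1}"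
    and M': "M' \<in> ({0..<n^2} \<times> {0..<n^2}) \<rightarrow>\<^sub>E {0, 1}"
  shows "M = M'"
proof (rule PiE_ext[OF M M'])
  fix p assume p: "p \<in> {0..<n^2} \<times> {0..<n^2}"
  define a c b d where "a = fst p div n" "c = fst p mod n" "b = snd p div n" "d = snd p mod n"
  have bounds: "a < n" "b < n" "c < n" "d < n"
    using p less_square_div_mod unfolding a_c_b_d_def by auto
  have p_eq: "p = (a * n + c, b * n + d)"
    unfolding a_c_b_d_def by simp
  have "M p = 1 \<longleftrightarrow> P (a, b) = (c + 1, d + 1)" "M' p = 1 \<longleftrightarrow> P (a, b) = (c + 1, d + 1)"
    unfolding p_eq by (rule correspondsD[OF assms(1) bounds], rule correspondsD[OF assms(2) bounds])
  moreover have "M p \<in> {0, 1}" "M' p \<in> {0, 1}"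
    using M M' p by auto
  ultimately show "M p = M' p" by auto
qed

lemma corresponds_unique_right:
  assumes "corresponds n M P" "corresponds n M P'"
    and P: "P \<in> ({0..<n} \<times> {0..<n}) \<rightarrow>\<^sub>E ({1..n} \<times> {1..n})"
    and P': "P' \<in> ({0..<n} \<times> {0..<n}) \<rightarrow>\<^sub>E ({1..n} \<times> {1..n})"
  shows "P = P'"
proof (rule PiE_ext[OF P P'])
  fix x assume x: "x \<in> {0..<n} \<times> {0..<n}"
  obtain a b where ab: "x = (a, b)" "a < n" "b < n"
    using x by auto
  have "P (a, b) \<in> {1..n} \<times> {1..n}"
    using PiE_mem[OF P x] ab(1) by simp
  then obtain q where q: "q \<in> {0..<n} \<times> {0..<n}" "P (a, b) = (fst q + 1, snd q + 1)"
    using ex1_implies_ex[OF ex1_offset_pair] by blast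
  have q_bounds: "fst q < n" "snd q < n"
    using q(1) by auto
  have "M (a * n + fst q, b * n + snd q) = 1 \<longleftrightarrow> P (a, b) = (fst q + 1, snd q + 1)"
    "M (a * n + fst q, b * n + snd q) = 1 \<longleftrightarrow> P' (a, b) = (fst q + 1, snd q + 1)"
    by (rule correspondsD[OF assms(1) ab(2,3) q_bounds], rule correspondsD[OF assms(2) ab(2,3) q_bounds])
  then show "P x = P' x"
    using q(2) ab by simp
qed

lemma perm_matrix_pair_matrix:
  assumes "M \<in> Sigma_sq n"
  shows "perm_matrix n (pair_matrix n M) = M"
  by (rule corresponds_unique_left[OF corresponds_perm_matrix corresponds_pair_matrix[OF assms]
        perm_matrix_extensional Sigma_sq_extensional[OF assms]])

lemma pair_matrix_perm_matrix:
  assumes "P \<in> Pi_n n"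
  shows "pair_matrix n (perm_matrix n P) = P"
proof -
  have M: "perm_matrix n P \<in> Sigma_sq n"
    using assms by (rule perm_matrix_in_Sigma_sq)
  show ?thesis
    by (rule corresponds_unique_right[OF corresponds_pair_matrix[OF M] corresponds_perm_matrix
          pair_matrix_extensional[OF M] Pi_n_extensional[OF assms]])
qed

theorem lemma2:
  fixes n :: nat
  assumes "n \<ge> 2"
  shows "\<exists>f. bij_betw f (Sigma_sq n) (Pi_n n)"
proof
  show "bij_betw (pair_matrix n) (Sigma_sq n) (Pi_n n)"
    by (rule bij_betw_byWitness[where f' = "perm_matrix n"])
      (auto simp: perm_matrix_pair_matrix pair_matrix_perm_matrix pair_matrix_in_Pi_n perm_matrix_in_Sigma_sq)
qed

end
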